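(* Assume $\hat\omega$ lies in the interior of $\mathbb{P}_\Omega$. The vertex-direction iteration with optimal step size $\alpha_n=\hat\alpha_n$, initialized at any $\omega^{(1)}\in\mathbb{P}_\Omega$, satisfies $$\|\omega^{(n+1)}-\hat\omega\|_{\mathbf K}^2\le\|\omega^{(1)}-\hat\omega\|_{\mathbf K}^2\exp\Big(-\frac{\alpha_*^2\,n}{4R_*^2}\Big),\qquad n\ge1,$$ where $R_*=[\lambda_{\max}(\mathbf K)(1-1/\Omega)]^{1/2}$, $\alpha_*=w_*/L$, $w_*=\min_i\hat\omega_i$ and $L=(\max_i\{\mathbf K^{-1}\}_{ii})^{1/2}$.
   Context: $\mathbf K$ is a real symmetric positive definite $\Omega\times\Omega$ matrix ($\Omega\ge2$) with largest eigenvalue $\lambda_{\max}(\mathbf K)$; $\|u\|_{\mathbf K}^2=u^T\mathbf K u$. $e_i$ is the $i$-th canonical basis vector of $\mathbb{R}^\Omega$ and $\mathbb{P}_\Omega=\{\omega\in\mathbb{R}^\Omega:\omega_i\ge0,\sum_i\omega_i=1\}$. The vertex-direction iteration is $\omega^{(n+1)}=\omega^{(n)}+\alpha_n(e_{i_n^+}-\omega^{(n)})$ with $i_n^+\in\arg\min_{i}e_i^T\mathbf K(\omega^{(n)}-\hat\omega)$; the optimal step size is $\hat\alpha_n=(e_{i_n^+}-\omega^{(n)})^T\mathbf K(\hat\omega-\omega^{(n)})/\|e_{i_n^+}-\omega^{(n)}\|_{\mathbf K}^2$ (if $e_{i_n^+}=\omega^{(n)}$ the iterate is left unchanged). *)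

theory Defs
  imports "HOL-Analysis.Analysis"
begin

definition knorm2 :: "real^'n^'n \<Rightarrow> real^'n \<Rightarrow> real" where
  "knorm2 K u = u \<bullet> (K *v u)"

definition sym_posdef :: "real^'n^'n \<Rightarrow> bool" where
  "sym_posdef K \<longleftrightarrow> transpose K = K \<and> (\<forall>x. x \<noteq> 0 \<longrightarrow> x \<bullet> (K *v x) > 0)"

definition lambda_max :: "real^'n^'n \<Rightarrow> real" where
  "lambda_max K = Max {l. \<exists>v. v \<noteq> 0 \<and> K *v v = l *\<^sub>R v}"

definition prob_simplex :: "(real^'n) set" where
  "prob_simplex = {w. (\<forall>i. w $ i \<ge> 0) \<and> sum (\<lambda>i. w $ i) UNIV = 1}"

definition opt_step :: "real^'n^'n \<Rightarrow> real^'n \<Rightarrow> real^'n \<Rightarrow> 'n \<Rightarrow> real" where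
  "opt_step K what w i =
     ((axis i 1 - w) \<bullet> (K *v (what - w))) / knorm2 K (axis i 1 - w)"

definition vd_step :: "real^'n^'n \<Rightarrow> real^'n \<Rightarrow> real^'n \<Rightarrow> real^'n \<Rightarrow> bool" where
  "vd_step K what w w' \<longleftrightarrow>
     (\<exists>i. (\<forall>j. axis i 1 \<bullet> (K *v (w - what)) \<le> axis j 1 \<bullet> (K *v (w - what))) \<and>
          w' = (if axis i 1 = w then w
                else w + opt_step K what w i *\<^sub>R (axis i 1 - w)))"

end

theory Submission
  imports Defs
begin

text \<open>Write d = \<omega> - what, g = K d and let i be the chosen vertex, so g_i is the smallest
  coordinate of g. Since the coordinates of d sum to 0, d^T K d = \<Sum>_j d_j (g_j - g_i), and
  Cauchy-Schwarz against the columns of K^-1 bounds |d_j| by L |d|_K; hence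
  |d|_K \<le> L \<Sum>_j (g_j - g_i). The exact line search along v = e_i - \<omega> removes s^2 / |v|_K^2
  from the squared error, where
  s = (\<omega> - e_i)^T K d = \<Sum>_j what_j (g_j - g_i) + |d|_K^2 \<ge> \<alpha>_* |d|_K + |d|_K^2,
  while |v|_K \<le> |e_i - what|_K + |d|_K \<le> 2 R_* + |d|_K. Together these give the contraction
  factor 1 - \<alpha>_*^2 / (4 R_*^2) \<le> exp (- \<alpha>_*^2 / (4 R_*^2)) per step. The iterates may leave
  the simplex; the argument only uses that their coordinates sum to 1.\<close>

lemma symmetric_matrix_inner_swap:
  fixes K :: "real^'n^'n"
  assumes "transpose K = K"
  shows "x \<bullet> (K *v y) = y \<bullet> (K *v x)"
proof -
  have "x \<bullet> (K *v y) = (transpose K *v x) \<bullet> y"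
    by (simp add: dot_lmul_matrix transpose_matrix_vector)
  then show ?thesis using assms by (simp add: inner_commute)
qed

lemma quadratic_nonneg_imp_discriminant_le:
  fixes p q r :: real
  assumes "r \<ge> 0" and nonneg: "\<And>t. 0 \<le> p + 2*t*q + t^2*r"
  shows "q^2 \<le> p*r"
proof (cases "r = 0")
  case True
  show ?thesis
  proof (rule ccontr)
    assume "\<not> ?thesis"
    then have "q \<noteq> 0" using True by simp
    have "0 \<le> p + 2*(-(p+1)/(2*q))*q + (-(p+1)/(2*q))^2*r" by (rule nonneg)
    also have "\<dots> = -1" using True \<open>q \<noteq> 0\<close> by (simp add: field_simps)
    finally show False by simp
  qed
next
  case False
  then have r: "r > 0" using assms(1) by simp
  have "0 \<le> p + 2*(-q/r)*q + (-q/r)^2*r" by (rule nonneg)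
  also have "\<dots> = p - q^2/r" using r by (simp add: field_simps power2_eq_square)
  finally show ?thesis using r by (simp add: field_simps)
qed

lemma psd_operator_cauchy_schwarz:
  fixes f :: "'a::real_inner \<Rightarrow> 'a"
  assumes lin: "linear f" and sym: "\<And>x y. x \<bullet> f y = y \<bullet> f x"
    and psd: "\<And>x. 0 \<le> x \<bullet> f x"
  shows "(x \<bullet> f y)^2 \<le> (x \<bullet> f x) * (y \<bullet> f y)"
proof (rule quadratic_nonneg_imp_discriminant_le[OF psd])
  fix t
  have "0 \<le> (x + t *\<^sub>R y) \<bullet> f (x + t *\<^sub>R y)" by (rule psd)
  also have "\<dots> = (x \<bullet> f x) + t*(x \<bullet> f y) + t*(y \<bullet> f x) + t^2*(y \<bullet> f y)"
    by (simp add: linear_add[OF lin] linear_cmul[OF lin] inner_add_left inner_add_right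
        power2_eq_square algebra_simps)
  finally show "0 \<le> (x \<bullet> f x) + 2*t*(x \<bullet> f y) + t^2*(y \<bullet> f y)"
    using sym[of y x] by simp
qed

lemma sym_posdefD:
  assumes "sym_posdef K"
  shows "transpose K = K" and "x \<noteq> 0 \<Longrightarrow> 0 < knorm2 K x"
  using assms unfolding sym_posdef_def knorm2_def by auto

lemma knorm2_nonneg:
  assumes "sym_posdef K"
  shows "0 \<le> knorm2 K x"
  using assms
  by (cases "x = 0") (auto simp: knorm2_def dest: sym_posdefD(2) intro: less_imp_le)

lemma knorm2_cauchy_schwarz:
  fixes K :: "real^'n^'n"
  assumes "sym_posdef K"
  shows "(x \<bullet> (K *v y))^2 \<le> knorm2 K x * knorm2 K y"
  using psd_operator_cauchy_schwarz[OF matrix_vector_mul_linear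
      symmetric_matrix_inner_swap[OF sym_posdefD(1)[OF assms]]]
    knorm2_nonneg[OF assms]
  unfolding knorm2_def by blast

lemma knorm2_add_scaleR:
  fixes K :: "real^'n^'n"
  assumes "transpose K = K"
  shows "knorm2 K (x + t *\<^sub>R y) = knorm2 K x + 2 * t * (y \<bullet> (K *v x)) + t^2 * knorm2 K y"
  using symmetric_matrix_inner_swap[OF assms, of x y]
  by (simp add: knorm2_def matrix_vector_right_distrib matrix_vector_mult_scaleR inner_add_left
      inner_add_right power2_eq_square algebra_simps)

lemma knorm_triangle:
  fixes K :: "real^'n^'n"
  assumes "sym_posdef K"
  shows "sqrt (knorm2 K (x + y)) \<le> sqrt (knorm2 K x) + sqrt (knorm2 K y)"
proof -
  have "\<bar>y \<bullet> (K *v x)\<bar> \<le> sqrt (knorm2 K x) * sqrt (knorm2 K y)"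
    using real_sqrt_le_mono[OF knorm2_cauchy_schwarz[OF assms, of y x]]
    by (simp add: real_sqrt_mult mult.commute)
  then have "knorm2 K (x + y) \<le> (sqrt (knorm2 K x) + sqrt (knorm2 K y))^2"
    using knorm2_add_scaleR[OF sym_posdefD(1)[OF assms], of x 1 y] knorm2_nonneg[OF assms]
    by (simp add: power2_sum)
  then show ?thesis
    using knorm2_nonneg[OF assms] by (intro real_le_lsqrt) simp_all
qed

lemma symmetric_matrix_max_rayleigh_eigenvalue:
  fixes K :: "real^'n^'n"
  assumes sym: "transpose K = K"
  obtains \<mu> v where "v \<noteq> 0" "K *v v = \<mu> *\<^sub>R v" "\<And>x. knorm2 K x \<le> \<mu> * (x \<bullet> x)"
proof -
  have "axis undefined 1 \<in> sphere (0::real^'n) 1" by (simp add: norm_axis_1)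
  moreover have "continuous_on (sphere 0 1) (knorm2 K)"
    unfolding knorm2_def by (intro continuous_intros matrix_vector_mult_linear_continuous_on)
  ultimately obtain x0 where x0: "x0 \<in> sphere 0 1"
    and max: "\<And>y. y \<in> sphere 0 1 \<Longrightarrow> knorm2 K y \<le> knorm2 K x0"
    using continuous_attains_sup[OF compact_sphere] by blast
  define \<mu> where "\<mu> = knorm2 K x0"
  have bound: "knorm2 K x \<le> \<mu> * (x \<bullet> x)" for x
  proof (cases "x = 0")
    case False
    have "knorm2 K x = (norm x)^2 * knorm2 K ((1 / norm x) *\<^sub>R x)"
      using False by (simp add: knorm2_def matrix_vector_mult_scaleR power2_eq_square)
    also have "\<dots> \<le> (norm x)^2 * \<mu>"
      using False max[of "(1 / norm x) *\<^sub>R x"] by (simp add: \<mu>_def)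
    finally show ?thesis by (simp add: dot_square_norm mult.commute)
  qed (simp add: knorm2_def)
  \<comment> \<open>A = \<mu> I - K is positive semidefinite with x0^T A x0 = 0, so Cauchy-Schwarz for A forces A x0 = 0\<close>
  define A where "A = (\<lambda>x. \<mu> *\<^sub>R x - K *v x)"
  have "linear A" unfolding A_def
    by (intro linearI) (auto simp: matrix_vector_right_distrib matrix_vector_mult_scaleR algebra_simps)
  moreover have "x \<bullet> A y = y \<bullet> A x" for x y
    unfolding A_def using symmetric_matrix_inner_swap[OF sym, of x y]
    by (simp add: inner_diff_right inner_commute)
  moreover have "0 \<le> x \<bullet> A x" for x
    unfolding A_def using bound[of x] by (simp add: inner_diff_right knorm2_def)
  ultimately have "(A x0 \<bullet> A x0)^2 \<le> (A x0 \<bullet> A (A x0)) * (x0 \<bullet> A x0)"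
    by (rule psd_operator_cauchy_schwarz)
  moreover have "x0 \<bullet> A x0 = 0"
    using x0 unfolding A_def \<mu>_def knorm2_def by (simp add: inner_diff_right dot_square_norm)
  ultimately have "A x0 = 0" by simp
  then have "K *v x0 = \<mu> *\<^sub>R x0" unfolding A_def by simp
  moreover have "x0 \<noteq> 0" using x0 by auto
  ultimately show ?thesis using bound that by blast
qed

lemma symmetric_matrix_finite_eigenvalues:
  fixes K :: "real^'n^'n"
  assumes sym: "transpose K = K"
  shows "finite {l. \<exists>v. v \<noteq> 0 \<and> K *v v = l *\<^sub>R v}" (is "finite ?S")
proof (rule ccontr)
  assume "infinite ?S"
  then obtain T where T: "card T = CARD('n) + 1" "T \<subseteq> ?S"
    using infinite_arbitrarily_large by blast
  define ev where "ev = (\<lambda>l. SOME v. v \<noteq> 0 \<and> K *v v = l *\<^sub>R v)"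
  have ev: "ev l \<noteq> 0 \<and> K *v ev l = l *\<^sub>R ev l" if "l \<in> T" for l
  proof -
    have "\<exists>v. v \<noteq> 0 \<and> K *v v = l *\<^sub>R v" using T(2) that by blast
    then show ?thesis unfolding ev_def by (rule someI_ex)
  qed
  have inj: "inj_on ev T"
  proof (rule inj_onI)
    fix l m assume "l \<in> T" "m \<in> T" "ev l = ev m"
    then have "l *\<^sub>R ev l = m *\<^sub>R ev l" using ev by metis
    then show "l = m" using ev[OF \<open>l \<in> T\<close>] by (simp add: scaleR_cancel_right)
  qed
  have "pairwise orthogonal (ev ` T)"
  proof (clarsimp simp: pairwise_def)
    fix l m assume lm: "l \<in> T" "m \<in> T" "ev l \<noteq> ev m"
    have "l * (ev l \<bullet> ev m) = ev m \<bullet> (K *v ev l)" using ev[OF lm(1)] by (simp add: inner_commute)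
    also have "\<dots> = ev l \<bullet> (K *v ev m)" by (rule symmetric_matrix_inner_swap[OF sym])
    also have "\<dots> = m * (ev l \<bullet> ev m)" using ev[OF lm(2)] by simp
    finally show "orthogonal (ev l) (ev m)" using lm by (auto simp: orthogonal_def)
  qed
  moreover have "0 \<notin> ev ` T" using ev by auto
  ultimately have "independent (ev ` T)" using pairwise_orthogonal_independent by blast
  then have "card (ev ` T) \<le> CARD('n)" using independent_bound by fastforce
  then show False using card_image[OF inj] T(1) by simp
qed

lemma knorm2_le_lambda_max:
  fixes K :: "real^'n^'n"
  assumes sym: "transpose K = K"
  shows "knorm2 K x \<le> lambda_max K * (x \<bullet> x)"
proof -
  obtain \<mu> v where "v \<noteq> 0" "K *v v = \<mu> *\<^sub>R v" and bound: "\<And>x. knorm2 K x \<le> \<mu> * (x \<bullet> x)"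
    using symmetric_matrix_max_rayleigh_eigenvalue[OF sym] by blast
  then have "\<mu> \<le> lambda_max K"
    unfolding lambda_max_def using symmetric_matrix_finite_eigenvalues[OF sym] by (intro Max_ge) auto
  then show ?thesis using bound[of x] by (meson inner_ge_zero mult_right_mono order_trans)
qed

lemma sym_posdef_matrix_inv_right:
  fixes K :: "real^'n^'n"
  assumes "sym_posdef K"
  shows "K *v (matrix_inv K *v y) = y"
proof -
  have "\<forall>x. K *v x = 0 \<longrightarrow> x = 0"
    using sym_posdefD(2)[OF assms] unfolding knorm2_def by fastforce
  then have "invertible K" using matrix_left_invertible_ker invertible_left_inverse by blast
  then have "K ** matrix_inv K = mat 1"
    unfolding invertible_def matrix_inv_def by (metis (mono_tags, lifting) someI_ex)
  then show ?thesis by (metis matrix_vector_mul_assoc matrix_vector_mul_lid)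
qed

lemma knorm2_matrix_inv_column:
  fixes K :: "real^'n^'n"
  assumes "sym_posdef K"
  shows "knorm2 K (matrix_inv K *v axis j 1) = matrix_inv K $ j $ j"
proof -
  have "knorm2 K (matrix_inv K *v axis j 1) = (matrix_inv K *v axis j 1) $ j"
    by (simp add: knorm2_def sym_posdef_matrix_inv_right[OF assms] inner_axis)
  then show ?thesis by (simp add: matrix_vector_mult_basis column_def)
qed

lemma coordinate_sq_le_knorm2:
  fixes K :: "real^'n^'n"
  assumes "sym_posdef K"
  shows "(x $ j)^2 \<le> knorm2 K x * matrix_inv K $ j $ j"
proof -
  have "x $ j = x \<bullet> (K *v (matrix_inv K *v axis j 1))"
    by (simp add: sym_posdef_matrix_inv_right[OF assms] inner_axis)
  then show ?thesis
    using knorm2_cauchy_schwarz[OF assms] knorm2_matrix_inv_column[OF assms] by metis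
qed

lemma lambda_max_pos:
  fixes K :: "real^'n^'n"
  assumes "sym_posdef K"
  shows "0 < lambda_max K"
proof -
  have "0 < knorm2 K (axis undefined 1)"
    by (rule sym_posdefD(2)[OF assms]) (simp add: axis_eq_0_iff)
  also have "\<dots> \<le> lambda_max K"
    using knorm2_le_lambda_max[OF sym_posdefD(1)[OF assms], of "axis undefined 1"]
    by (simp add: inner_axis_axis)
  finally show ?thesis .
qed

definition inv_diag_bound :: "real^'n^'n \<Rightarrow> real" where
  "inv_diag_bound K = sqrt (Max (range (\<lambda>i. matrix_inv K $ i $ i)))"

definition alpha_star :: "real^'n^'n \<Rightarrow> real^'n \<Rightarrow> real" where
  "alpha_star K w = Min (range (\<lambda>i. w $ i)) / inv_diag_bound K"

definition R_star :: "real^'n^'n \<Rightarrow> real" where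
  "R_star K = sqrt (lambda_max K * (1 - 1 / real CARD('n)))"

lemma inv_diag_le_inv_diag_bound_sq:
  fixes K :: "real^'n^'n"
  assumes "sym_posdef K"
  shows "0 \<le> matrix_inv K $ j $ j" and "matrix_inv K $ j $ j \<le> (inv_diag_bound K)^2"
proof -
  have nonneg: "0 \<le> matrix_inv K $ i $ i" for i
    using knorm2_matrix_inv_column[OF assms] knorm2_nonneg[OF assms] by metis
  then show "0 \<le> matrix_inv K $ j $ j" .
  have le_max: "matrix_inv K $ i $ i \<le> Max (range (\<lambda>i. matrix_inv K $ i $ i))" for i
    by (rule Max_ge) auto
  then have "0 \<le> Max (range (\<lambda>i. matrix_inv K $ i $ i))"
    using nonneg order_trans by blast
  then show "matrix_inv K $ j $ j \<le> (inv_diag_bound K)^2"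
    unfolding inv_diag_bound_def using le_max by simp
qed

lemma inv_diag_bound_nonneg:
  fixes K :: "real^'n^'n"
  assumes "sym_posdef K"
  shows "0 \<le> inv_diag_bound K"
proof -
  have "matrix_inv K $ j $ j \<le> Max (range (\<lambda>i. matrix_inv K $ i $ i))" for j
    by (rule Max_ge) auto
  then show ?thesis
    unfolding inv_diag_bound_def
    using inv_diag_le_inv_diag_bound_sq(1)[OF assms] order_trans real_sqrt_ge_zero by blast
qed

lemma abs_coordinate_le_inv_diag_bound:
  fixes K :: "real^'n^'n"
  assumes "sym_posdef K"
  shows "\<bar>x $ j\<bar> \<le> sqrt (knorm2 K x) * inv_diag_bound K"
proof -
  have "(x $ j)^2 \<le> knorm2 K x * (inv_diag_bound K)^2"
    using coordinate_sq_le_knorm2[OF assms, of x j] inv_diag_le_inv_diag_bound_sq[OF assms, of j]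
      knorm2_nonneg[OF assms, of x]
    by (meson mult_left_mono order_trans)
  then have "sqrt ((x $ j)^2) \<le> sqrt (knorm2 K x * (inv_diag_bound K)^2)"
    by (rule real_sqrt_le_mono)
  then show ?thesis using inv_diag_bound_nonneg[OF assms] by (simp add: real_sqrt_mult)
qed

lemma one_le_lambda_max_mult_inv_diag_bound:
  fixes K :: "real^'n^'n"
  assumes "sym_posdef K"
  shows "1 \<le> lambda_max K * (inv_diag_bound K)^2"
proof -
  have "1 \<le> sqrt (knorm2 K (axis j 1)) * inv_diag_bound K" for j :: 'n
    using abs_coordinate_le_inv_diag_bound[OF assms, of "axis j 1" j] by simp
  then have "1 \<le> (sqrt (knorm2 K (axis j 1)) * inv_diag_bound K)^2" for j :: 'n
    by (simp add: one_le_power)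
  also have "\<dots> j \<le> lambda_max K * (inv_diag_bound K)^2" for j :: 'n
    using knorm2_le_lambda_max[OF sym_posdefD(1)[OF assms], of "axis j 1"] knorm2_nonneg[OF assms]
    by (simp add: power_mult_distrib inner_axis_axis mult_right_mono)
  finally show ?thesis .
qed

lemma inv_diag_bound_pos:
  fixes K :: "real^'n^'n"
  assumes "sym_posdef K"
  shows "0 < inv_diag_bound K"
proof -
  have "inv_diag_bound K \<noteq> 0"
    using one_le_lambda_max_mult_inv_diag_bound[OF assms] by auto
  then show ?thesis using inv_diag_bound_nonneg[OF assms] by simp
qed

lemma Min_coordinate_pos:
  fixes w :: "real^'n"
  assumes "\<forall>i. 0 < w $ i"
  shows "0 < Min (range (\<lambda>i. w $ i))"
proof -
  have "Min (range (\<lambda>i. w $ i)) \<in> range (\<lambda>i. w $ i)" by (rule Min_in) auto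
  then show ?thesis using assms by auto
qed

lemma alpha_star_pos:
  fixes K :: "real^'n^'n"
  assumes "sym_posdef K" and "\<forall>i. 0 < w $ i"
  shows "0 < alpha_star K w"
  unfolding alpha_star_def using Min_coordinate_pos[OF assms(2)] inv_diag_bound_pos[OF assms(1)] by simp

lemma prob_simplex_inner_self_le_1:
  assumes "w \<in> prob_simplex"
  shows "w \<bullet> w \<le> 1"
proof -
  have nonneg: "0 \<le> w $ i" and sum1: "(\<Sum>i\<in>UNIV. w $ i) = 1" for i
    using assms unfolding prob_simplex_def by auto
  then have "w $ i \<le> 1" for i
    using member_le_sum[of i UNIV "\<lambda>i. w $ i"] by simp
  then have "w \<bullet> w \<le> (\<Sum>i\<in>UNIV. w $ i)"
    unfolding inner_vec_def using nonneg by (intro sum_mono) (simp add: mult_left_le)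
  then show ?thesis using sum1 by simp
qed

lemma R_star_pos_and_lambda_max_le:
  fixes K :: "real^'n^'n"
  assumes "CARD('n) \<ge> 2" and "sym_posdef K"
  shows "0 < R_star K" and "lambda_max K \<le> 2 * (R_star K)^2"
proof -
  have half: "1/2 \<le> 1 - 1 / real CARD('n)" using assms(1) by (simp add: field_simps)
  have pos: "0 < lambda_max K * (1 - 1 / real CARD('n))"
    using half lambda_max_pos[OF assms(2)] by (simp add: less_le_trans)
  then show "0 < R_star K" unfolding R_star_def by simp
  have "lambda_max K * (1/2) \<le> lambda_max K * (1 - 1 / real CARD('n))"
    using half lambda_max_pos[OF assms(2)] by (intro mult_left_mono) simp_all
  then show "lambda_max K \<le> 2 * (R_star K)^2" unfolding R_star_def using pos by (simp add: mult_ac)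
qed

lemma knorm_vertex_minus_simplex_le:
  fixes K :: "real^'n^'n"
  assumes "CARD('n) \<ge> 2" and "sym_posdef K" and "w \<in> prob_simplex"
  shows "sqrt (knorm2 K (axis i 1 - w)) \<le> 2 * R_star K"
proof -
  have "(axis i 1 - w) \<bullet> (axis i 1 - w) = 1 - 2 * w $ i + w \<bullet> w"
    by (simp add: inner_diff_left inner_diff_right inner_axis inner_axis' inner_axis_axis inner_commute)
  also have "\<dots> \<le> 2"
  proof -
    have "0 \<le> w $ i" using assms(3) unfolding prob_simplex_def by simp
    then show ?thesis using prob_simplex_inner_self_le_1[OF assms(3)] by linarith
  qed
  finally have "knorm2 K (axis i 1 - w) \<le> lambda_max K * 2"
    using knorm2_le_lambda_max[OF sym_posdefD(1)[OF assms(2)], of "axis i 1 - w"]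
      lambda_max_pos[OF assms(2)] by (meson less_imp_le mult_left_mono order_trans)
  also have "\<dots> \<le> (2 * R_star K)^2"
    using R_star_pos_and_lambda_max_le(2)[OF assms(1,2)] by (simp add: power_mult_distrib)
  finally show ?thesis
    using R_star_pos_and_lambda_max_le(1)[OF assms(1,2)] by (intro real_le_lsqrt) simp_all
qed

lemma alpha_star_le_two_R_star:
  fixes K :: "real^'n^'n"
  assumes "CARD('n) \<ge> 2" and "sym_posdef K" and "w \<in> prob_simplex" and "\<forall>i. 0 < w $ i"
  shows "alpha_star K w \<le> 2 * R_star K"
proof -
  define w_min where "w_min = Min (range (\<lambda>i. w $ i))"
  have "0 \<le> w_min"
    unfolding w_min_def by (rule less_imp_le[OF Min_coordinate_pos[OF assms(4)]])
  moreover have "w_min \<le> w $ undefined" unfolding w_min_def by (rule Min_le) auto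
  moreover have "w $ undefined \<le> 1"
    using assms(3) member_le_sum[of undefined UNIV "\<lambda>i. w $ i"] unfolding prob_simplex_def by simp
  ultimately have "w_min^2 \<le> 1" by (simp add: power_le_one)
  then have "(alpha_star K w)^2 \<le> 1 / (inv_diag_bound K)^2"
    unfolding alpha_star_def w_min_def[symmetric] power_divide by (rule divide_right_mono) simp
  also have "\<dots> \<le> lambda_max K"
    using one_le_lambda_max_mult_inv_diag_bound[OF assms(2)] inv_diag_bound_pos[OF assms(2)]
    by (simp add: pos_divide_le_eq)
  also have "\<dots> \<le> 2 * (R_star K)^2" by (rule R_star_pos_and_lambda_max_le(2)[OF assms(1,2)])
  also have "\<dots> \<le> 4 * (R_star K)^2" by simp
  also have "\<dots> = (2 * R_star K)^2" by (simp add: power_mult_distrib)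
  finally show ?thesis
    by (rule power2_le_imp_le) (use R_star_pos_and_lambda_max_le(1)[OF assms(1,2)] in simp)
qed

lemma knorm_le_inv_diag_bound_mult_gap_sum:
  fixes K :: "real^'n^'n"
  assumes "sym_posdef K" and "(\<Sum>j\<in>UNIV. d $ j) = 0" and "\<forall>j. (K *v d) $ i \<le> (K *v d) $ j"
  shows "sqrt (knorm2 K d) \<le> inv_diag_bound K * (\<Sum>j\<in>UNIV. (K *v d) $ j - (K *v d) $ i)"
proof -
  define g where "g = K *v d"
  define a where "a = sqrt (knorm2 K d)"
  define H where "H = (\<Sum>j\<in>UNIV. g $ j - g $ i)"
  have a_nonneg: "0 \<le> a" and a_sq: "a * a = knorm2 K d"
    using knorm2_nonneg[OF assms(1)] unfolding a_def by auto
  have gap_nonneg: "0 \<le> g $ j - g $ i" for j using assms(3) unfolding g_def by simp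
  then have H_nonneg: "0 \<le> H" unfolding H_def by (rule sum_nonneg)
  \<comment> \<open>d sums to zero, so shifting g by the constant g_i does not change d \<bullet> g\<close>
  have "knorm2 K d = (\<Sum>j\<in>UNIV. d $ j * (g $ j - g $ i))"
    using assms(2) unfolding knorm2_def g_def inner_vec_def
    by (simp add: right_diff_distrib sum_subtractf sum_distrib_right[symmetric])
  also have "\<dots> \<le> (\<Sum>j\<in>UNIV. a * inv_diag_bound K * (g $ j - g $ i))"
    using abs_coordinate_le_inv_diag_bound[OF assms(1), of d] gap_nonneg
    by (intro sum_mono mult_right_mono) (auto simp: a_def abs_le_iff)
  finally have "a * a \<le> a * (inv_diag_bound K * H)"
    unfolding a_sq H_def by (simp add: sum_distrib_left mult.assoc)
  then show ?thesis
    using a_nonneg H_nonneg inv_diag_bound_nonneg[OF assms(1)]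
    unfolding a_def[symmetric] H_def[symmetric] g_def[symmetric]
    by (cases "a = 0") simp_all
qed

lemma vertex_gap_lower_bound:
  fixes K :: "real^'n^'n"
  assumes "sym_posdef K" and "what \<in> prob_simplex" and "\<forall>j. 0 < what $ j"
    and "(\<Sum>j\<in>UNIV. w $ j) = 1"
    and "\<forall>j. (K *v (w - what)) $ i \<le> (K *v (w - what)) $ j"
  shows "alpha_star K what * sqrt (knorm2 K (w - what)) + knorm2 K (w - what)
           \<le> (w - axis i 1) \<bullet> (K *v (w - what))"
proof -
  define d where "d = w - what"
  define g where "g = K *v d"
  define H where "H = (\<Sum>j\<in>UNIV. g $ j - g $ i)"
  define w_min where "w_min = Min (range (\<lambda>j. what $ j))"
  have what_sum: "(\<Sum>j\<in>UNIV. what $ j) = 1" using assms(2) unfolding prob_simplex_def by simp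
  have "alpha_star K what * sqrt (knorm2 K d) \<le> w_min * H"
  proof -
    have "(\<Sum>j\<in>UNIV. d $ j) = 0" using assms(4) what_sum unfolding d_def by (simp add: sum_subtractf)
    then have "sqrt (knorm2 K d) \<le> inv_diag_bound K * H"
      using knorm_le_inv_diag_bound_mult_gap_sum[OF assms(1)] assms(5)
      unfolding H_def g_def d_def by blast
    then have "sqrt (knorm2 K d) / inv_diag_bound K \<le> H"
      using inv_diag_bound_pos[OF assms(1)] by (simp add: pos_divide_le_eq mult.commute)
    then have "w_min * (sqrt (knorm2 K d) / inv_diag_bound K) \<le> w_min * H"
      by (rule mult_left_mono) (rule less_imp_le[OF Min_coordinate_pos[OF assms(3)], folded w_min_def])
    then show ?thesis unfolding alpha_star_def w_min_def[symmetric] by simp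
  qed
  also have "\<dots> \<le> (\<Sum>j\<in>UNIV. what $ j * (g $ j - g $ i))"
    unfolding H_def sum_distrib_left using assms(5)
    by (intro sum_mono mult_right_mono) (auto simp: w_min_def g_def d_def)
  also have "\<dots> = what \<bullet> g - g $ i"
    using what_sum by (simp add: inner_vec_def right_diff_distrib sum_subtractf sum_distrib_right[symmetric])
  finally have "alpha_star K what * sqrt (knorm2 K d) \<le> what \<bullet> g - g $ i" .
  moreover have "(w - axis i 1) \<bullet> g = (what \<bullet> g - g $ i) + knorm2 K d"
    unfolding knorm2_def g_def d_def by (simp add: inner_diff_left inner_axis')
  ultimately show ?thesis unfolding g_def d_def by simp
qed

lemma exact_line_search_knorm2:
  fixes K :: "real^'n^'n"
  assumes "transpose K = K" and "knorm2 K v \<noteq> 0"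
  shows "knorm2 K (d + (- (v \<bullet> (K *v d)) / knorm2 K v) *\<^sub>R v)
           = knorm2 K d - (v \<bullet> (K *v d))^2 / knorm2 K v"
  unfolding knorm2_add_scaleR[OF assms(1)] using assms(2) by (simp add: field_simps power2_eq_square)

lemma line_search_gain_lower_bound:
  fixes \<alpha> a s V R :: real
  assumes "0 \<le> \<alpha>" "\<alpha> \<le> 2 * R" "0 \<le> a" "\<alpha> * a + a^2 \<le> s" "0 < V" "V \<le> (2 * R + a)^2"
  shows "\<alpha>^2 * a^2 / (4 * R^2) \<le> s^2 / V"
proof -
  have "\<alpha> * a * (2 * R + a) \<le> 2 * R * s"
  proof -
    have "\<alpha> * a^2 \<le> 2 * R * a^2" using assms(2) by (simp add: mult_right_mono)
    moreover have "2 * R * (\<alpha> * a + a^2) \<le> 2 * R * s"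
      using assms(1,2,4) by (intro mult_left_mono) simp_all
    ultimately show ?thesis by (simp add: algebra_simps power2_eq_square)
  qed
  moreover have "0 \<le> \<alpha> * a * (2 * R + a)" using assms(1-3) by simp
  ultimately have "(\<alpha> * a)^2 * (2 * R + a)^2 \<le> (2 * R * s)^2"
    by (metis power_mono power_mult_distrib)
  then have "(\<alpha> * a)^2 * V \<le> 4 * R^2 * s^2"
    using mult_left_mono[OF assms(6), of "(\<alpha> * a)^2"] by (simp add: power_mult_distrib)
  then show ?thesis
    using assms(1,2,5) by (cases "R = 0") (simp_all add: field_simps power_mult_distrib)
qed

lemma vd_step_sum_eq_1:
  assumes "(\<Sum>j\<in>UNIV. w $ j) = 1" and "vd_step K what w w'"
  shows "(\<Sum>j\<in>UNIV. w' $ j) = 1"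
  using assms unfolding vd_step_def
  by (auto simp: sum.distrib sum_subtractf sum_distrib_left[symmetric] axis_def)

lemma vd_step_contraction:
  fixes K :: "real^'n^'n"
  assumes "CARD('n) \<ge> 2" and pd: "sym_posdef K"
    and what: "what \<in> prob_simplex" "\<forall>j. 0 < what $ j"
    and sum_w: "(\<Sum>j\<in>UNIV. w $ j) = 1" and "vd_step K what w w'"
  shows "knorm2 K (w' - what)
           \<le> knorm2 K (w - what) * exp (- ((alpha_star K what)^2 / (4 * (R_star K)^2)))"
proof -
  obtain i where i_min: "\<forall>j. (K *v (w - what)) $ i \<le> (K *v (w - what)) $ j"
    and w': "w' = (if axis i 1 = w then w else w + opt_step K what w i *\<^sub>R (axis i 1 - w))"
    using assms(6) unfolding vd_step_def by (auto simp: inner_axis')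
  define d where "d = w - what"
  define a where "a = sqrt (knorm2 K d)"
  define s where "s = (w - axis i 1) \<bullet> (K *v d)"
  define c where "c = (alpha_star K what)^2 / (4 * (R_star K)^2)"
  have a_nonneg: "0 \<le> a" and a_sq: "a^2 = knorm2 K d"
    using knorm2_nonneg[OF pd] unfolding a_def by auto
  have gap: "alpha_star K what * a + a^2 \<le> s"
    unfolding a_sq unfolding a_def s_def d_def by (rule vertex_gap_lower_bound[OF pd what sum_w i_min])
  have "knorm2 K (w' - what) \<le> knorm2 K d * (1 - c)"
  proof (cases "axis i 1 = w")
    case True
    have "0 \<le> alpha_star K what * a"
      using a_nonneg alpha_star_pos[OF pd what(2)] by simp
    then have "knorm2 K d \<le> 0" using gap True unfolding s_def a_sq by simp
    then show ?thesis using True w' knorm2_nonneg[OF pd, of d] unfolding d_def by simp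
  next
    case False
    define v where "v = axis i 1 - w"
    define V where "V = knorm2 K v"
    have V_pos: "0 < V" unfolding V_def v_def using False by (intro sym_posdefD(2)[OF pd]) simp
    have "sqrt V \<le> sqrt (knorm2 K (axis i 1 - what)) + sqrt (knorm2 K (- d))"
      using knorm_triangle[OF pd, of "axis i 1 - what" "- d"] unfolding V_def v_def d_def by simp
    also have "\<dots> \<le> 2 * R_star K + a"
      using knorm_vertex_minus_simplex_le[OF assms(1) pd what(1)] unfolding a_def knorm2_def by (simp add: linear_neg[OF matrix_vector_mul_linear])
    finally have V_le: "V \<le> (2 * R_star K + a)^2" by (rule sqrt_le_D)
    have "w' - what = d + (- (v \<bullet> (K *v d)) / V) *\<^sub>R v"
      using w' False unfolding v_def V_def d_def opt_step_def
      by (simp add: matrix_vector_mult_diff_distrib inner_diff_right)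
    moreover have "v \<bullet> (K *v d) = - s" unfolding v_def s_def by (simp add: inner_diff_left)
    ultimately have "knorm2 K (w' - what) = knorm2 K d - s^2 / V"
      using exact_line_search_knorm2[OF sym_posdefD(1)[OF pd], of v d, folded V_def] V_pos by simp
    moreover have "c * knorm2 K d \<le> s^2 / V"
      using line_search_gain_lower_bound[OF less_imp_le[OF alpha_star_pos[OF pd what(2)]]
          alpha_star_le_two_R_star[OF assms(1) pd what] a_nonneg gap V_pos V_le]
      unfolding c_def a_sq by (simp add: field_simps)
    ultimately show ?thesis by (simp add: algebra_simps)
  qed
  also have "\<dots> \<le> knorm2 K d * exp (- c)"
    using knorm2_nonneg[OF pd] exp_ge_add_one_self[of "- c"] by (simp add: mult_left_mono)
  finally show ?thesis unfolding c_def d_def by simp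
qed

theorem lemmaA6:
  fixes K :: "real^'n^'n" and what :: "real^'n" and \<omega> :: "nat \<Rightarrow> real^'n"
  assumes "CARD('n) \<ge> 2"
    and "sym_posdef K"
    and "what \<in> prob_simplex" and "\<forall>i. what $ i > 0"
    and "\<omega> 1 \<in> prob_simplex"
    and "\<forall>n\<ge>1. vd_step K what (\<omega> n) (\<omega> (Suc n))"
  shows "\<forall>n\<ge>1.
    knorm2 K (\<omega> (Suc n) - what)
      \<le> knorm2 K (\<omega> 1 - what) *
         exp (- (((Min (range (\<lambda>i. what $ i)) / sqrt (Max (range (\<lambda>i. matrix_inv K $ i $ i))))\<^sup>2 * real n)
                 / (4 * (sqrt (lambda_max K * (1 - 1 / real CARD('n))))\<^sup>2)))"
proof -
  define A where "A = (alpha_star K what)^2"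
  define D where "D = 4 * (R_star K)^2"
  have "(\<Sum>j\<in>UNIV. \<omega> (Suc n) $ j) = 1 \<and>
        knorm2 K (\<omega> (Suc n) - what) \<le> knorm2 K (\<omega> 1 - what) * exp (- (A * real n / D))" for n
  proof (induction n)
    case 0
    show ?case using assms(5) unfolding prob_simplex_def by simp
  next
    case (Suc n)
    have sum_eq: "(\<Sum>j\<in>UNIV. \<omega> (Suc n) $ j) = 1" using Suc.IH ..
    have step: "vd_step K what (\<omega> (Suc n)) (\<omega> (Suc (Suc n)))" using assms(6) by simp
    have "knorm2 K (\<omega> (Suc (Suc n)) - what) \<le> knorm2 K (\<omega> (Suc n) - what) * exp (- (A / D))"
      using vd_step_contraction[OF assms(1-4) sum_eq step] unfolding A_def D_def .
    also have "\<dots> \<le> knorm2 K (\<omega> 1 - what) * exp (- (A * real n / D)) * exp (- (A / D))"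
      using Suc.IH by (simp add: mult_right_mono)
    also have "\<dots> = knorm2 K (\<omega> 1 - what) * exp (- (A * real (Suc n) / D))"
      by (simp add: mult.assoc exp_add[symmetric] add_divide_distrib distrib_left)
    finally show ?case using vd_step_sum_eq_1[OF sum_eq step] by simp
  qed
  then show ?thesis
    unfolding A_def D_def alpha_star_def inv_diag_bound_def R_star_def by blast
qed

end
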